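(* Let $\ln_G:(0,\infty)\to\mathbb{R}$ be a continuous, strictly increasing, strictly concave function with $\ln_G(1)=0$. Put $G(t):=\ln_G(e^t)$ and $\chi(u,v):=G\big(G^{-1}(u)+G^{-1}(v)\big)$ (for $u,v$ in the range of $G$), so that $\ln_G(xy)=\chi(\ln_G x,\ln_G y)$ for all $x,y>0$. Fix $\alpha>0$, $\alpha\neq 1$, and for a probability distribution $(p_1,\dots,p_W)$ define $$Z_{G,\alpha}(p_1,\dots,p_W):=\frac{\ln_G\big(\sum_{i=1}^W p_i^{\alpha}\big)}{1-\alpha}.$$ Let $A$, $B$ be statistically independent systems with arbitrary probability distributions $\{p_i^A\}_{i=1}^{W_A}$, $\{p_j^B\}_{j=1}^{W_B}$, and let $A\cup B$ be the composed system with joint distribution $p^{A\cup B}_{ij}=p_i^Ap_j^B$. Then $$Z_{G,\alpha}(A\cup B)=\Phi\big(Z_{G,\alpha}(A),Z_{G,\alpha}(B)\big),\qquad \Phi(x,y):=\frac{1}{1-\alpha}\,\chi\big((1-\alpha)x,(1-\alpha)y\big),$$ and $\Phi$ satisfies (wherever defined) $\Phi(x,y)=\Phi(y,x)$, $\Phi(x,0)=x$, and $\Phi(\Phi(x,y),z)=\Phi(x,\Phi(y,z))$.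
   Context: $Z_{G,\alpha}(X)$ denotes the entropy evaluated on the probability distribution of system $X$. *)

theory Defs
  imports "HOL-Analysis.Analysis"
begin

definition strictly_concave_on :: "real set \<Rightarrow> (real \<Rightarrow> real) \<Rightarrow> bool" where
  "strictly_concave_on S f \<longleftrightarrow> convex S \<and>
     (\<forall>x\<in>S. \<forall>y\<in>S. \<forall>u. x \<noteq> y \<and> 0 < u \<and> u < 1 \<longrightarrow>
        f (u * x + (1 - u) * y) > u * f x + (1 - u) * f y)"

definition Gfun :: "(real \<Rightarrow> real) \<Rightarrow> real \<Rightarrow> real" where
  "Gfun lnG t = lnG (exp t)"

text \<open>chi(u,v) = G(G^{-1}(u) + G^{-1}(v)), meaningful for u, v in the range of G\<close>
definition chi :: "(real \<Rightarrow> real) \<Rightarrow> real \<Rightarrow> real \<Rightarrow> real" where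
  "chi lnG u v = Gfun lnG (inv (Gfun lnG) u + inv (Gfun lnG) v)"

definition Phi :: "(real \<Rightarrow> real) \<Rightarrow> real \<Rightarrow> real \<Rightarrow> real \<Rightarrow> real" where
  "Phi lnG \<alpha> x y = chi lnG ((1 - \<alpha>) * x) ((1 - \<alpha>) * y) / (1 - \<alpha>)"

definition Zent :: "(real \<Rightarrow> real) \<Rightarrow> real \<Rightarrow> 'a set \<Rightarrow> ('a \<Rightarrow> real) \<Rightarrow> real" where
  "Zent lnG \<alpha> I p = lnG (\<Sum>i\<in>I. p i powr \<alpha>) / (1 - \<alpha>)"

definition prob_dist :: "'a set \<Rightarrow> ('a \<Rightarrow> real) \<Rightarrow> bool" where
  "prob_dist I p \<longleftrightarrow> finite I \<and> I \<noteq> {} \<and> (\<forall>i\<in>I. 0 \<le> p i) \<and> (\<Sum>i\<in>I. p i) = 1"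

end

theory Submission
  imports Defs
begin

text \<open>Since \<open>G\<close> is injective, \<open>\<chi>(G a, G b) = G (a + b)\<close>, so in the coordinates
  \<open>(1 - \<alpha>) x = G a\<close> the law \<open>\<Phi>\<close> is plain addition, which gives commutativity, the
  neutral element \<open>G 0 = ln\<^sub>G 1 = 0\<close> and associativity. For independent systems the sum
  \<open>\<Sum> p\<^sup>\<alpha>\<close> is multiplicative, and \<open>ln\<^sub>G (x y) = \<chi>(ln\<^sub>G x, ln\<^sub>G y)\<close> turns this into the
  composition law.\<close>

lemma inj_Gfun:
  assumes "strict_mono_on {0<..} lnG"
  shows "inj (Gfun lnG)"
proof -
  have "strict_mono (Gfun lnG)"
    by (rule strict_monoI) (auto simp: Gfun_def intro: strict_mono_onD[OF assms])
  then show ?thesis by (rule strict_mono_imp_inj_on)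
qed

lemma chi_Gfun:
  assumes "inj (Gfun lnG)"
  shows "chi lnG (Gfun lnG a) (Gfun lnG b) = Gfun lnG (a + b)"
  using assms by (simp add: chi_def)

lemma Phi_Gfun:
  assumes "inj (Gfun lnG)" "\<alpha> \<noteq> 1"
    and "(1 - \<alpha>) * x = Gfun lnG a" "(1 - \<alpha>) * y = Gfun lnG b"
  shows "(1 - \<alpha>) * Phi lnG \<alpha> x y = Gfun lnG (a + b)"
  using assms by (simp add: Phi_def chi_Gfun)

lemma Phi_commute: "Phi lnG \<alpha> x y = Phi lnG \<alpha> y x"
  by (simp add: Phi_def chi_def add.commute)

lemma Phi_right_zero:
  assumes "inj (Gfun lnG)" "lnG 1 = 0" "\<alpha> \<noteq> 1"
    and "(1 - \<alpha>) * x \<in> range (Gfun lnG)"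
  shows "Phi lnG \<alpha> x 0 = x"
proof -
  obtain a where a: "(1 - \<alpha>) * x = Gfun lnG a" using assms(4) by auto
  have "(1 - \<alpha>) * 0 = Gfun lnG 0" using assms(2) by (simp add: Gfun_def)
  from Phi_Gfun[OF assms(1,3) a this] a have "(1 - \<alpha>) * Phi lnG \<alpha> x 0 = (1 - \<alpha>) * x"
    by simp
  then show ?thesis using assms(3) by simp
qed

lemma Phi_assoc:
  assumes "inj (Gfun lnG)" "\<alpha> \<noteq> 1"
    and "(1 - \<alpha>) * x \<in> range (Gfun lnG)" "(1 - \<alpha>) * y \<in> range (Gfun lnG)"
      "(1 - \<alpha>) * z \<in> range (Gfun lnG)"
  shows "Phi lnG \<alpha> (Phi lnG \<alpha> x y) z = Phi lnG \<alpha> x (Phi lnG \<alpha> y z)"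
proof -
  obtain a b c where a: "(1 - \<alpha>) * x = Gfun lnG a" and b: "(1 - \<alpha>) * y = Gfun lnG b"
    and c: "(1 - \<alpha>) * z = Gfun lnG c"
    using assms(3-5) by blast
  note Phi = Phi_Gfun[OF assms(1,2)]
  have "(1 - \<alpha>) * Phi lnG \<alpha> (Phi lnG \<alpha> x y) z = Gfun lnG (a + b + c)"
    by (rule Phi[OF Phi[OF a b] c])
  also have "\<dots> = (1 - \<alpha>) * Phi lnG \<alpha> x (Phi lnG \<alpha> y z)"
    by (simp add: Phi[OF a Phi[OF b c]] add.assoc)
  finally show ?thesis using assms(2) by simp
qed

lemma prob_dist_sum_powr_pos:
  assumes "prob_dist I p" "\<alpha> > 0"
  shows "(\<Sum>i\<in>I. p i powr \<alpha>) > 0"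
proof -
  have fin: "finite I" and nonneg: "\<forall>i\<in>I. 0 \<le> p i" and "(\<Sum>i\<in>I. p i) = 1"
    using assms(1) by (auto simp: prob_dist_def)
  then obtain i where i: "i \<in> I" "p i \<noteq> 0"
    by (metis sum.neutral zero_neq_one)
  have "0 < p i powr \<alpha>" using i by simp
  also have "\<dots> \<le> (\<Sum>i\<in>I. p i powr \<alpha>)"
    using i fin by (intro member_le_sum) auto
  finally show ?thesis .
qed

lemma sum_powr_product:
  fixes p :: "'a \<Rightarrow> real" and q :: "'b \<Rightarrow> real"
  assumes "\<forall>i\<in>I. 0 \<le> p i" "\<forall>j\<in>J. 0 \<le> q j"
  shows "(\<Sum>(i, j)\<in>I \<times> J. (p i * q j) powr \<alpha>)
           = (\<Sum>i\<in>I. p i powr \<alpha>) * (\<Sum>j\<in>J. q j powr \<alpha>)"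
proof -
  have "(\<Sum>(i, j)\<in>I \<times> J. (p i * q j) powr \<alpha>) = (\<Sum>i\<in>I. \<Sum>j\<in>J. p i powr \<alpha> * q j powr \<alpha>)"
    using assms by (simp add: sum.cartesian_product[symmetric] powr_mult)
  also have "\<dots> = (\<Sum>i\<in>I. p i powr \<alpha>) * (\<Sum>j\<in>J. q j powr \<alpha>)"
    by (simp add: sum_product)
  finally show ?thesis .
qed

lemma Zent_eq_Gfun_ln:
  assumes "\<alpha> \<noteq> 1" "(\<Sum>i\<in>I. p i powr \<alpha>) > 0"
  shows "(1 - \<alpha>) * Zent lnG \<alpha> I p = Gfun lnG (ln (\<Sum>i\<in>I. p i powr \<alpha>))"
  using assms by (simp add: Zent_def Gfun_def)

lemma Zent_independent:
  assumes "strict_mono_on {0<..} lnG" "\<alpha> > 0" "\<alpha> \<noteq> 1"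
    and "prob_dist I p" "prob_dist J q"
  shows "Zent lnG \<alpha> (I \<times> J) (\<lambda>(i, j). p i * q j)
           = Phi lnG \<alpha> (Zent lnG \<alpha> I p) (Zent lnG \<alpha> J q)"
proof -
  define S where "S = (\<Sum>i\<in>I. p i powr \<alpha>)"
  define T where "T = (\<Sum>j\<in>J. q j powr \<alpha>)"
  have "S > 0" "T > 0"
    unfolding S_def T_def using assms(2,4,5) by (auto intro: prob_dist_sum_powr_pos)
  have "(\<Sum>x\<in>I \<times> J. (case x of (i, j) \<Rightarrow> p i * q j) powr \<alpha>) = S * T"
    using assms(4,5) unfolding S_def T_def prob_dist_def
    by (simp add: sum_powr_product[symmetric] case_prod_unfold)
  then have "(1 - \<alpha>) * Zent lnG \<alpha> (I \<times> J) (\<lambda>(i, j). p i * q j) = Gfun lnG (ln S + ln T)"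
    using \<open>S > 0\<close> \<open>T > 0\<close> assms(3) by (simp add: Zent_def Gfun_def exp_add)
  also have "\<dots> = (1 - \<alpha>) * Phi lnG \<alpha> (Zent lnG \<alpha> I p) (Zent lnG \<alpha> J q)"
    using \<open>S > 0\<close> \<open>T > 0\<close> assms(3) unfolding S_def T_def
    by (intro Phi_Gfun[symmetric] inj_Gfun assms(1) Zent_eq_Gfun_ln)
  finally show ?thesis using assms(3) by simp
qed

theorem mainTheorem4:
  fixes lnG :: "real \<Rightarrow> real" and \<alpha> :: real
    and IA :: "'a set" and pA :: "'a \<Rightarrow> real"
    and IB :: "'b set" and pB :: "'b \<Rightarrow> real"
  assumes cont: "continuous_on {0<..} lnG"
    and incr: "strict_mono_on {0<..} lnG"
    and conc: "strictly_concave_on {0<..} lnG"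
    and one: "lnG 1 = 0"
    and alpha_pos: "\<alpha> > 0" and alpha_ne: "\<alpha> \<noteq> 1"
    and distA: "prob_dist IA pA" and distB: "prob_dist IB pB"
  shows "Zent lnG \<alpha> (IA \<times> IB) (\<lambda>(i, j). pA i * pB j)
           = Phi lnG \<alpha> (Zent lnG \<alpha> IA pA) (Zent lnG \<alpha> IB pB)
       \<and> (\<forall>x y. (1 - \<alpha>) * x \<in> range (Gfun lnG) \<and> (1 - \<alpha>) * y \<in> range (Gfun lnG)
               \<longrightarrow> Phi lnG \<alpha> x y = Phi lnG \<alpha> y x)
       \<and> (\<forall>x. (1 - \<alpha>) * x \<in> range (Gfun lnG) \<longrightarrow> Phi lnG \<alpha> x 0 = x)
       \<and> (\<forall>x y z. (1 - \<alpha>) * x \<in> range (Gfun lnG) \<and> (1 - \<alpha>) * y \<in> range (Gfun lnG)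
                 \<and> (1 - \<alpha>) * z \<in> range (Gfun lnG)
               \<longrightarrow> Phi lnG \<alpha> (Phi lnG \<alpha> x y) z = Phi lnG \<alpha> x (Phi lnG \<alpha> y z))"
proof -
  have inj: "inj (Gfun lnG)" by (rule inj_Gfun[OF incr])
  show ?thesis
    using Zent_independent[OF incr alpha_pos alpha_ne distA distB] Phi_commute
      Phi_right_zero[OF inj one alpha_ne] Phi_assoc[OF inj alpha_ne]
    by blast
qed

end
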